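(* Let $(E,\mathscr{T},\le)$ be a Hausdorff Tychonoff space endowed with either the discrete preorder (i.e. $x\le y$ iff $x=y$) or the indiscrete preorder (i.e. $x\le y$ for all $x,y$). Let $\beta:E\to\beta E$ be the Stone–Čech compactification and $\le_\beta$ the preorder on $\beta E$ with $G(\le_\beta)=\bigcap_{f\in\mathcal{F}}G_{\tilde f}$, where $\mathcal{F}$ is the family of continuous isotone functions $f:E\to[0,1]$ and $\tilde f$ the unique continuous extension of $f\circ\beta^{-1}$ to $\beta E$. Then $(\beta E,\mathscr{T}_\beta,\le_\beta)$ is the Stone–Čech compactification endowed with the discrete preorder (resp. the indiscrete preorder).
   Context: Isotone: $x\le y\Rightarrow f(x)\le f(y)$. $G_f=\{(x,y):f(x)\le f(y)\}$, and $G(\le)$ denotes the graph of a preorder. *)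

theory Defs
  imports "HOL-Analysis.Analysis"
begin

definition isotone_on :: "'a topology \<Rightarrow> ('a \<Rightarrow> 'a \<Rightarrow> bool) \<Rightarrow> ('a \<Rightarrow> real) \<Rightarrow> bool" where
  "isotone_on X le f \<longleftrightarrow> (\<forall>x\<in>topspace X. \<forall>y\<in>topspace X. le x y \<longrightarrow> f x \<le> f y)"

definition stone_cech_compactification :: "'a topology \<Rightarrow> 'b topology \<Rightarrow> ('a \<Rightarrow> 'b) \<Rightarrow> bool" where
  "stone_cech_compactification X K b \<longleftrightarrow>
     compact_space K \<and> Hausdorff_space K \<and> embedding_map X K b \<and>
     K closure_of (b ` topspace X) = topspace K \<and>
     (\<forall>f. continuous_map X (top_of_set {0..1::real}) f \<longrightarrow>
        (\<exists>g. continuous_map K (top_of_set {0..1::real}) g \<and> (\<forall>x\<in>topspace X. g (b x) = f x)))"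

definition beta_le :: "'a topology \<Rightarrow> ('a \<Rightarrow> 'a \<Rightarrow> bool) \<Rightarrow> 'b topology \<Rightarrow> ('a \<Rightarrow> 'b) \<Rightarrow> 'b \<Rightarrow> 'b \<Rightarrow> bool" where
  "beta_le X le K b y1 y2 \<longleftrightarrow>
     (\<forall>f. continuous_map X (top_of_set {0..1::real}) f \<and> isotone_on X le f \<longrightarrow>
        (\<forall>g. continuous_map K (top_of_set {0..1::real}) g \<and> (\<forall>x\<in>topspace X. g (b x) = f x)
              \<longrightarrow> g y1 \<le> g y2))"

end

theory Submission
  imports Defs
begin

text \<open>For the discrete preorder every map is isotone, so \<open>\<le>\<^sub>\<beta>\<close> is tested against all continuous
  maps into [0,1]; on a completely regular T1 compactification these separate points. For the
  indiscrete preorder the isotone maps are the constant ones, whose continuous extensions are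
  constant because the image of the embedding is dense.\<close>

lemma isotone_on_eq: "isotone_on X (\<lambda>x y. x = y) f"
  by (simp add: isotone_on_def)

lemma isotone_on_indiscrete_imp_constant:
  assumes "isotone_on X (\<lambda>x y. True) f" "x \<in> topspace X" "y \<in> topspace X"
  shows "f x = f y"
  using assms unfolding isotone_on_def by (meson order_antisym)

lemma embedding_map_imp_continuous_map: "embedding_map X Y f \<Longrightarrow> continuous_map X Y f"
  unfolding embedding_map_def
  using homeomorphic_imp_continuous_map continuous_map_in_subtopology by blast

lemma beta_le_refl: "beta_le X le K b y y"
  by (simp add: beta_le_def)

lemma beta_le_imp_eq_if_all_isotone:
  assumes "completely_regular_space K" "t1_space K" "continuous_map X K b"
    and all_isotone: "\<And>f. continuous_map X (top_of_set {0..1}) f \<Longrightarrow> isotone_on X le f"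
    and "y1 \<in> topspace K" "y2 \<in> topspace K" and le: "beta_le X le K b y1 y2"
  shows "y1 = y2"
proof (rule ccontr)
  assume "y1 \<noteq> y2"
  moreover have "closedin K {y1}"
    using \<open>t1_space K\<close> \<open>y1 \<in> topspace K\<close> by (simp add: t1_space_closedin_singleton)
  ultimately have "\<exists>g. continuous_map K (top_of_set {0..1::real}) g \<and> g y2 = 0 \<and> g ` {y1} \<subseteq> {1}"
    using \<open>completely_regular_space K\<close> \<open>y2 \<in> topspace K\<close>
    unfolding completely_regular_space_def by blast
  then obtain g where g: "continuous_map K (top_of_set {0..1::real}) g" and "g y2 = 0" "g y1 = 1"
    by blast
  have gb: "continuous_map X (top_of_set {0..1}) (g \<circ> b)"
    using continuous_map_compose[OF \<open>continuous_map X K b\<close> g] .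
  have "g y1 \<le> g y2"
    using le g gb all_isotone[OF gb] unfolding beta_le_def by simp
  with \<open>g y2 = 0\<close> \<open>g y1 = 1\<close> show False by simp
qed

lemma continuous_map_constant_on_dense:
  assumes g: "continuous_map K Y g" and "t1_space Y"
    and dense: "K closure_of S = topspace K" and const: "\<And>x y. x \<in> S \<Longrightarrow> y \<in> S \<Longrightarrow> g x = g y"
    and "y1 \<in> topspace K" "y2 \<in> topspace K"
  shows "g y1 = g y2"
proof -
  have dense': "K closure_of (topspace K \<inter> S) = topspace K"
    using dense by (simp flip: closure_of_restrict)
  then have "topspace K \<inter> S \<noteq> {}"
    using \<open>y1 \<in> topspace K\<close> by auto
  then obtain s where s: "s \<in> topspace K" "s \<in> S"
    by blast
  have "g s \<in> topspace Y"
    using g s(1) by (meson continuous_map_image_subset_topspace image_subset_iff)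
  then have "closedin Y {g s}"
    using \<open>t1_space Y\<close> by (simp add: t1_space_closedin_singleton)
  then have "closedin K {y \<in> topspace K. g y \<in> {g s}}"
    by (rule closedin_continuous_map_preimage[OF g])
  moreover have "topspace K \<inter> S \<subseteq> {y \<in> topspace K. g y \<in> {g s}}"
    using const s(2) by blast
  ultimately have "K closure_of (topspace K \<inter> S) \<subseteq> {y \<in> topspace K. g y \<in> {g s}}"
    by (simp only: closure_of_minimal)
  then have "g y = g s" if "y \<in> topspace K" for y
    using dense' that by auto
  then show ?thesis
    using \<open>y1 \<in> topspace K\<close> \<open>y2 \<in> topspace K\<close> by simp
qed

lemma beta_le_indiscrete:
  assumes dense: "K closure_of (b ` topspace X) = topspace K"
    and "y1 \<in> topspace K" "y2 \<in> topspace K"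
  shows "beta_le X (\<lambda>x y. True) K b y1 y2"
  unfolding beta_le_def
proof (intro allI impI)
  fix f g
  assume f: "continuous_map X (top_of_set {0..1}) f \<and> isotone_on X (\<lambda>x y. True) f"
    and g: "continuous_map K (top_of_set {0..1::real}) g \<and> (\<forall>x\<in>topspace X. g (b x) = f x)"
  have "g (b x) = g (b x')" if "x \<in> topspace X" "x' \<in> topspace X" for x x'
    using f g that isotone_on_indiscrete_imp_constant[of X f x x'] by simp
  then have "g u = g v" if "u \<in> b ` topspace X" "v \<in> b ` topspace X" for u v
    using that by blast
  moreover have "t1_space (top_of_set {0..1::real})"
    by (rule t1_space_subtopology[OF t1_space_euclidean])
  ultimately have "g y1 = g y2"
    using continuous_map_constant_on_dense[OF conjunct1[OF g] _ dense] assms(2,3) by blast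
  then show "g y1 \<le> g y2" by simp
qed

theorem mainTheorem8:
  fixes X :: "'a topology" and K :: "'b topology" and b :: "'a \<Rightarrow> 'b"
  assumes "Hausdorff_space X" and "completely_regular_space X"
    and "stone_cech_compactification X K b"
  shows "(\<forall>y1\<in>topspace K. \<forall>y2\<in>topspace K. beta_le X (\<lambda>x y. x = y) K b y1 y2 \<longleftrightarrow> y1 = y2)
       \<and> (\<forall>y1\<in>topspace K. \<forall>y2\<in>topspace K. beta_le X (\<lambda>x y. True) K b y1 y2)"
proof -
  have "compact_space K" "Hausdorff_space K" "embedding_map X K b"
    and dense: "K closure_of (b ` topspace X) = topspace K"
    using assms(3) unfolding stone_cech_compactification_def by simp_all
  then have K: "completely_regular_space K" "t1_space K" and b: "continuous_map X K b"
    by (simp_all add: normal_imp_completely_regular_space compact_Hausdorff_or_regular_imp_normal_space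
        Hausdorff_imp_t1_space embedding_map_imp_continuous_map)
  have "beta_le X (\<lambda>x y. x = y) K b y1 y2 \<longleftrightarrow> y1 = y2"
    if "y1 \<in> topspace K" "y2 \<in> topspace K" for y1 y2
    using beta_le_imp_eq_if_all_isotone[OF K b isotone_on_eq that] beta_le_refl by auto
  with beta_le_indiscrete[OF dense] show ?thesis
    by simp
qed

end
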